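(* Let $n\ge 3$ be a prime power and let $x,y,z$ be the coordinate functions of the GK curve over $\mathbb{F}_{n^6}$. For $1\le k\le n^2-1$ define sets of rational functions $T_k$ as follows. For $1\le k\le n-1$: $T_k=\{y^iz^j/x^k : 0\le i\le k,\ k-i+1\le j\le n^2-n\}\cup\{y^iz^j/x^k : k+1\le i\le n,\ 0\le j\le n^2-n\}$. For $n\le k\le n^2-n-2$: $T_k=\{y^iz^j/x^k : 0\le i\le n,\ k-i+1\le j\le n^2-n\}$. For $n^2-n-1\le k\le n^2-1$: $T_k=\{y^iz^j/x^k : k-n^2+n+1\le i\le n,\ k-i+1\le j\le n^2-n\}$. Let $T=\bigcup_{k=1}^{n^2-1}T_k$. Then the functions listed are pairwise distinct and $|T|=g=\tfrac12(n^5-2n^3+n^2)$, the genus of the GK curve.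
   Context: Let $n\ge 2$ be a prime power and $q=n^3$. The GK curve is the (absolutely irreducible, nonsingular) curve in $\mathbb{P}^3$ over $\mathbb{F}_{q^2}$ with affine equations $Z^{n^2-n+1}=Y\,h(X)$, $X^n+X=Y^{n+1}$, where $h(X)=\sum_{i=0}^{n}(-1)^{i+1}X^{i(n-1)}$. Its function field is $\mathbb{F}_{q^2}(x,y,z)$ with $z^{n^2-n+1}=y h(x)$ and $x^n+x=y^{n+1}$. It has a unique point at infinity $P_\infty=(1:0:0:0)$, and $P_0$ denotes the affine point $(0,0,0)$. Its genus is $g=\tfrac12(n^3+1)(n^2-2)+1=\tfrac12(n^5-2n^3+n^2)$. *)

theory Defs
  imports "HOL-Computational_Algebra.Polynomial"
begin

text \<open>Polynomials in X, Y, Z over a field are represented as nested univariate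
polynomials  'a poly poly poly : Z is the outermost variable, Y the middle one,
X the innermost one.\<close>

definition gkX :: "'a::comm_ring_1 poly poly poly" where
  "gkX = [: [: [:0, 1:] :] :]"

definition gkY :: "'a::comm_ring_1 poly poly poly" where
  "gkY = [: [:0, 1:] :]"

definition gkZ :: "'a::comm_ring_1 poly poly poly" where
  "gkZ = [:0, 1:]"

definition gk_h :: "nat \<Rightarrow> 'a::comm_ring_1 poly poly poly" where
  "gk_h n = (\<Sum>i\<le>n. (-1) ^ (i + 1) * gkX ^ (i * (n - 1)))"

definition gk_ideal :: "nat \<Rightarrow> 'a::comm_ring_1 poly poly poly \<Rightarrow> bool" where
  "gk_ideal n f \<longleftrightarrow> (\<exists>A B.
     f = A * (gkY ^ (n + 1) - gkX ^ n - gkX) + B * (gkZ ^ (n^2 - n + 1) - gkY * gk_h n))"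

text \<open>The rational functions y^i z^j / x^k and y^i' z^j' / x^k' coincide in the
  function field (fraction field of the coordinate ring F[X,Y,Z]/I) iff
  X^k' Y^i Z^j - X^k Y^i' Z^j' lies in I.\<close>
definition gk_fun_eq :: "nat \<Rightarrow> 'a::comm_ring_1 itself \<Rightarrow> nat \<times> nat \<times> nat \<Rightarrow> nat \<times> nat \<times> nat \<Rightarrow> bool" where
  "gk_fun_eq n _ a b = (case a of (i, j, k) \<Rightarrow> case b of (i', j', k') \<Rightarrow>
     gk_ideal n ((gkX ^ k' * gkY ^ i * gkZ ^ j - gkX ^ k * gkY ^ i' * gkZ ^ j')
        :: 'a poly poly poly))"

definition T_idx :: "nat \<Rightarrow> nat \<Rightarrow> (nat \<times> nat \<times> nat) set" where
  "T_idx n k =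
    (if 1 \<le> k \<and> k \<le> n - 1 then
       {(i, j, k) | i j. i \<le> k \<and> k - i + 1 \<le> j \<and> j \<le> n^2 - n}
       \<union> {(i, j, k) | i j. k + 1 \<le> i \<and> i \<le> n \<and> j \<le> n^2 - n}
     else if n \<le> k \<and> k \<le> n^2 - n - 2 then
       {(i, j, k) | i j. i \<le> n \<and> k - i + 1 \<le> j \<and> j \<le> n^2 - n}
     else if n^2 - n - 1 \<le> k \<and> k \<le> n^2 - 1 then
       {(i, j, k) | i j. k + n + 1 \<le> i + n^2 \<and> i \<le> n \<and> k - i + 1 \<le> j \<and> j \<le> n^2 - n}
     else {})"

definition T_all :: "nat \<Rightarrow> (nat \<times> nat \<times> nat) set" where
  "T_all n = (\<Union>k\<in>{1..n^2 - 1}. T_idx n k)"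

end

theory Submission
  imports Defs
begin

text \<open>
  The function y^i z^j / x^k corresponds to the monomial X^k Y^i Z^j, and two such functions
  coincide iff the binomial X^k' Y^i Z^j - X^k Y^i' Z^j' equals A g1 + B g2, where
  g1 = Y^(n+1) - X^n - X and g2 = Z^(n^2-n+1) - Y h(X). Since g2 is monic in Z and g1 does
  not involve Z, reducing A modulo g2 shows that a combination of Z-degree at most n^2 - n is
  g1 times a polynomial; as g1 has Y-degree n + 1, a binomial with i, i' <= n can be such a
  multiple only if it vanishes.

  T consists exactly of the triples with i <= n, j <= n^2 - n and 1 <= k < i + j; summing
  i + j - 1 over the (n + 1)(n^2 - n + 1) = n^3 + 1 pairs (i, j) gives (n^3 + 1)(n^2 - 2)/2 + 1.
\<close>

lemma degree_diff_eq_left: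
  fixes p q :: "'a::ab_group_add poly"
  shows "degree q < degree p \<Longrightarrow> degree (p - q) = degree p"
  using degree_add_eq_left[of "- q" p] by simp

lemma monic_division:
  fixes f g :: "'a::comm_ring_1 poly"
  assumes "lead_coeff g = 1"
  obtains q r where "f = g * q + r" and "r = 0 \<or> degree r < degree g"
proof -
  obtain q r where qr: "pseudo_divmod f g = (q, r)"
    by (cases "pseudo_divmod f g")
  have "g \<noteq> 0"
    using assms by auto
  from pseudo_divmod[OF this qr] assms show thesis
    by (intro that[of q r]) simp_all
qed

lemma eq_0_if_reduced_combination:
  fixes f A B g :: "'b::idom poly poly" and p :: "'b poly"
  assumes monic: "lead_coeff g = 1"
    and comb: "f = A * [:p:] + B * g"
    and deg: "degree f < degree g"
    and coeff_deg: "\<And>t. degree (coeff f t) < degree p"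
  shows "f = 0"
proof -
  obtain q r where A: "A = g * q + r" and r: "r = 0 \<or> degree r < degree g"
    using monic_division[OF monic] .
  have "f - smult p r = g * (B + q * [:p:])"
    using comb A by (simp add: algebra_simps)
  moreover have "degree (f - smult p r) < degree g"
    using deg r degree_smult_le[of p r] degree_diff_le_max[of f "smult p r"] by auto
  ultimately have f: "f = smult p r"
    using dvd_imp_degree_le[of g "f - smult p r"] by fastforce
  have "coeff f t = 0" for t
  proof (rule ccontr)
    assume "coeff f t \<noteq> 0"
    moreover have "p dvd coeff f t"
      using f by simp
    ultimately show False
      using dvd_imp_degree_le coeff_deg[of t] by fastforce
  qed
  then show ?thesis
    by (simp add: poly_eq_iff)
qed

lemma monom3_eq_iff:
  "monom (monom (monom (1::'a::zero_neq_one) k) i) j = monom (monom (monom 1 k') i') j'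
    \<longleftrightarrow> (i, j, k) = (i', j', k')"
  by (auto simp: monom_eq_iff')

lemma gkX_power: "(gkX :: 'a::comm_ring_1 poly poly poly) ^ k = [:[:monom 1 k:]:]"
  unfolding gkX_def by (induction k) (auto simp: monom_Suc pCons_one)

lemma gkY_power: "(gkY :: 'a::comm_ring_1 poly poly poly) ^ i = [:monom 1 i:]"
  unfolding gkY_def by (induction i) (auto simp: monom_Suc pCons_one)

lemma gkZ_power: "(gkZ :: 'a::comm_ring_1 poly poly poly) ^ j = monom 1 j"
  unfolding gkZ_def by (induction j) (auto simp: monom_Suc)

lemma gk_monomial:
  "(gkX :: 'a::comm_ring_1 poly poly poly) ^ k * gkY ^ i * gkZ ^ j = monom (monom (monom 1 k) i) j"
  by (simp add: gkX_power gkY_power gkZ_power smult_monom mult_monom)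

lemma gk_relation_Y:
  "\<exists>p. (gkY ^ (n + 1) - gkX ^ n - gkX :: 'a::comm_ring_1 poly poly poly) = [:p:] \<and> degree p = n + 1"
proof (intro exI conjI)
  let ?p = "monom 1 (n + 1) - [:monom 1 n + monom 1 1:] :: 'a poly poly"
  have X: "(gkX :: 'a poly poly poly) = [:[:monom 1 1:]:]"
    using gkX_power[of 1, where 'a='a] by simp
  show "(gkY ^ (n + 1) - gkX ^ n - gkX :: 'a poly poly poly) = [:?p:]"
    by (simp only: gkX_power gkY_power) (simp add: X del: One_nat_def)
  have "degree [:monom 1 n + monom 1 1 :: 'a poly:] < degree (monom 1 (n + 1) :: 'a poly poly)"
    by (simp add: degree_monom_eq)
  then show "degree ?p = n + 1"
    by (simp add: degree_diff_eq_left degree_monom_eq)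
qed

lemma degree_gk_h: "degree (gk_h n :: 'a::comm_ring_1 poly poly poly) = 0"
proof -
  have "degree ((-1) ^ (i + 1) * gkX ^ (i * (n - 1)) :: 'a poly poly poly) = 0" for i
    using degree_mult_le[of "(-1 :: 'a poly poly poly) ^ (i + 1)" "gkX ^ (i * (n - 1))"]
      degree_power_le[of "-1 :: 'a poly poly poly" "i + 1"]
    by (simp add: gkX_power)
  then show ?thesis
    unfolding gk_h_def using degree_sum_le[of "{..n}"]
    by (metis (no_types, lifting) le_zero_eq finite_atMost)
qed

lemma gk_relation_Z:
  assumes "0 < m"
  shows "lead_coeff (gkZ ^ m - gkY * gk_h n :: 'a::comm_ring_1 poly poly poly) = 1"
    and "degree (gkZ ^ m - gkY * gk_h n :: 'a::comm_ring_1 poly poly poly) = m"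
proof -
  have "degree (gkY * gk_h n :: 'a poly poly poly) < degree ((gkZ :: 'a poly poly poly) ^ m)"
    using assms degree_mult_le[of "gkY :: 'a poly poly poly" "gk_h n"]
    by (simp add: degree_gk_h gkY_def gkZ_power degree_monom_eq)
  then show "lead_coeff (gkZ ^ m - gkY * gk_h n :: 'a poly poly poly) = 1"
    and "degree (gkZ ^ m - gkY * gk_h n :: 'a poly poly poly) = m"
    by (simp_all add: degree_diff_eq_left coeff_eq_0 gkZ_power degree_monom_eq)
qed

lemma gk_fun_eq_imp_eq:
  fixes F :: "'a::idom itself"
  assumes "i \<le> n" "i' \<le> n" "j \<le> n^2 - n" "j' \<le> n^2 - n"
    and "gk_fun_eq n F (i, j, k) (i', j', k')"
  shows "(i, j, k) = (i', j', k')"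
proof -
  define f :: "'a poly poly poly"
    where "f = monom (monom (monom 1 k') i) j - monom (monom (monom 1 k) i') j'"
  define g :: "'a poly poly poly" where "g = gkZ ^ (n^2 - n + 1) - gkY * gk_h n"
  obtain p where Y_rel: "(gkY ^ (n + 1) - gkX ^ n - gkX :: 'a poly poly poly) = [:p:]"
    and deg_p: "degree p = n + 1"
    using gk_relation_Y by blast
  have monic_g: "lead_coeff g = 1" and deg_g: "degree g = n^2 - n + 1"
    unfolding g_def using gk_relation_Z[of "n^2 - n + 1"] by simp_all
  obtain A B where "f = A * [:p:] + B * g"
    using assms(5) unfolding gk_fun_eq_def gk_ideal_def gk_monomial f_def g_def Y_rel by auto
  moreover have "degree f < degree g"
    unfolding f_def deg_g using assms(3,4)
    by (intro degree_diff_less) (simp_all add: degree_monom_eq)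
  moreover have "degree (coeff f t) < degree p" for t
    unfolding f_def deg_p using assms(1,2)
    by (auto intro!: degree_diff_less simp: degree_monom_eq)
  ultimately have "f = 0"
    using eq_0_if_reduced_combination[OF monic_g] by blast
  then show ?thesis
    unfolding f_def by (auto simp: monom3_eq_iff)
qed

lemma mem_T_idx_iff:
  assumes "1 \<le> k" "k \<le> n^2 - 1"
  shows "(i, j, k) \<in> T_idx n k \<longleftrightarrow> i \<le> n \<and> j \<le> n^2 - n \<and> k < i + j"
proof -
  have "n \<le> n^2"
    by (simp add: power2_nat_le_imp_le)
  then show ?thesis
    using assms unfolding T_idx_def by (simp split: if_split) arith
qed

lemma snd_snd_mem_T_idx: "x \<in> T_idx n k \<Longrightarrow> snd (snd x) = k"
  unfolding T_idx_def by (simp only: split: if_splits) auto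

lemma T_all_eq: "T_all n = {(i, j, k). i \<le> n \<and> j \<le> n^2 - n \<and> 1 \<le> k \<and> k < i + j}"
proof -
  have "n \<le> n^2"
    by (simp add: power2_nat_le_imp_le)
  have "(i, j, k) \<in> T_all n \<longleftrightarrow> i \<le> n \<and> j \<le> n^2 - n \<and> 1 \<le> k \<and> k < i + j" for i j k
  proof -
    have "(i, j, k) \<in> T_all n \<longleftrightarrow> 1 \<le> k \<and> k \<le> n^2 - 1 \<and> (i, j, k) \<in> T_idx n k"
      unfolding T_all_def using snd_snd_mem_T_idx[of "(i, j, k)" n] by fastforce
    also have "\<dots> \<longleftrightarrow> i \<le> n \<and> j \<le> n^2 - n \<and> 1 \<le> k \<and> k < i + j"
      using \<open>n \<le> n^2\<close> mem_T_idx_iff[of k n i j] by linarith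
    finally show ?thesis .
  qed
  then show ?thesis
    by auto
qed

lemma card_box_below_sum:
  "card {(i, j, k). i \<le> a \<and> j \<le> b \<and> 1 \<le> k \<and> k < i + j} = (\<Sum>i\<le>a. \<Sum>j\<le>b. i + j - 1)"
proof -
  have "{(i, j, k). i \<le> a \<and> j \<le> b \<and> 1 \<le> k \<and> k < i + j}
      = (SIGMA i:{..a}. SIGMA j:{..b}. {1..<i + j})"
    by auto
  then show ?thesis
    by simp
qed

lemma double_sum_shifted_atMost: "2 * (\<Sum>j\<le>b. i + j) = (b + 1) * (2 * i + b :: nat)"
  by (induction b) (auto simp: algebra_simps)

lemma double_sum_pred_box:
  "2 * (\<Sum>i\<le>a. \<Sum>j\<le>b. i + j - 1) + 2 * ((a + 1) * (b + 1))
    = (a + 1) * (b + 1) * (a + b :: nat) + 2"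
proof (induction a)
  case 0
  show ?case
    by (induction b) (auto simp: algebra_simps)
next
  case (Suc a)
  then show ?case
    using double_sum_shifted_atMost[of a b] by (simp add: algebra_simps)
qed

lemma double_card_T_all:
  assumes "2 \<le> n"
  shows "2 * card (T_all n) = n^5 - 2 * n^3 + n^2"
proof -
  define m where "m = n^2 - n"
  have "n \<le> n * n"
    using assms by simp
  then have sq: "n * n = m + n"
    by (simp add: m_def power2_eq_square)
  have pairs: "(n + 1) * (m + 1) = n^3 + 1"
    by (simp add: power3_eq_cube sq algebra_simps)
  have "2 * card (T_all n) + 2 * (n^3 + 1) = (n^3 + 1) * n^2 + 2"
    using double_sum_pred_box[of m n]
    unfolding T_all_eq card_box_below_sum pairs m_def[symmetric] power2_eq_square sq
    by (simp add: ac_simps)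
  moreover have "2 * n^3 \<le> n^2 * n^3" \<comment> \<open>so the subtraction in the claim does not truncate\<close>
    using assms \<open>n \<le> n * n\<close> unfolding power2_eq_square by (intro mult_le_mono1) linarith
  ultimately show ?thesis
    by (simp add: algebra_simps power_add[symmetric])
qed

theorem mainTheorem1:
  fixes n :: nat and F :: "'a::{field, finite} itself"
  assumes "n \<ge> 3"
    and "\<exists>p e. prime p \<and> e > 0 \<and> n = p ^ e"
    and "card (UNIV :: 'a set) = n ^ 6"
  shows "(\<forall>a\<in>T_all n. \<forall>b\<in>T_all n. a \<noteq> b \<longrightarrow> \<not> gk_fun_eq n F a b)
       \<and> 2 * card (T_all n) = n^5 - 2 * n^3 + n^2"
proof (intro conjI ballI impI)
  fix a b
  assume a: "a \<in> T_all n" and b: "b \<in> T_all n" and "a \<noteq> b"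
  obtain i j k i' j' k' where "a = (i, j, k)" and "b = (i', j', k')"
    by (cases a, cases b)
  with a b \<open>a \<noteq> b\<close> show "\<not> gk_fun_eq n F a b"
    unfolding T_all_eq using gk_fun_eq_imp_eq[of i n i' j j' F k k'] by auto
next
  show "2 * card (T_all n) = n^5 - 2 * n^3 + n^2"
    using assms(1) by (intro double_card_T_all) simp
qed

end
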